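(* Let $Z,X$ be real vector spaces, $\Omega\subseteq Z$ nonempty, $f:Z\to X$, and let $K\subseteq X$ be a nontrivial convex cone with a convex base $B$. Consider the vector optimization problem of minimizing $f$ over $\Omega$ with respect to $K$. Then: (i) every BeV proper efficient solution is an efficient solution; (ii) every HuV proper efficient solution is a BeV proper efficient solution, and the converse holds if $f(\Omega)+K$ is convex; (iii) every VP solution is a VH solution; (iv) every VH solution is a BeV proper efficient solution.
   Context: $K$ nontrivial means $K\neq\{0\}$ and $K\neq X$. A base of $K$ is a set $B$ with $0\notin B$ such that each $k\in K\setminus\{0\}$ has a unique representation $k=tb$ with $t>0$, $b\in B$. For $A\subseteq X$: $cone(A)=\{ta: t\ge0, a\in A\}$; $conv(A)$ is the convex hull; $cor(A):=\{x\in A:\ \forall x'\in X\ \exists \lambda'>0 \text{ with } x+\lambda x'\in A\ \forall\lambda\in[0,\lambda']\}$; $vcl(A):=\{b\in X:\ \exists x\in X \text{ such that } \forall\lambda'>0\ \exists\lambda\in[0,\lambda'] \text{ with } b+\lambda x\in A\}$. For a cone $C\subseteq X$, $x_0\in\Omega$ is efficient with respect to $C$ if $(f(\Omega)-f(x_0))\cap(-C)=\{0\}$; an efficient solution means efficient with respect to $K$. $x_0\in\Omega$ is: a VP solution if there is a convex set $V$ with $0\in V$, $cor(V)=V$, $cone(B+V)\neq X$, such that $x_0$ is efficient with respect to $cone(B+V)$; a VH solution if there is a pointed convex cone $C$ ($C\cap(-C)=\{0\}$) with $K\setminus\{0\}\subseteq cor(C)$ such that $x_0$ is efficient with respect to $C$;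 a HuV proper efficient solution if $vcl\big(conv\big(cone((f(\Omega)-f(x_0))\cup K)\big)\big)\cap(-K)=\{0\}$; a BeV proper efficient solution if $vcl\big(cone(f(\Omega)-f(x_0)+K)\big)\cap(-K)=\{0\}$. *)

theory Defs
  imports "HOL-Analysis.Analysis"
begin

text \<open>cone(A) = {t a : t \<ge> 0, a \<in> A} is the library's "cone hull A" (lemma cone_hull_expl);
  conv(A) is "convex hull A".\<close>

definition cor :: "'a::real_vector set \<Rightarrow> 'a set" where
  "cor A = {x \<in> A. \<forall>x'. \<exists>l'>0. \<forall>l\<in>{0..l'}. x + l *\<^sub>R x' \<in> A}"

definition vcl :: "'a::real_vector set \<Rightarrow> 'a set" where
  "vcl A = {b. \<exists>x. \<forall>l'>0. \<exists>l\<in>{0..l'}. b + l *\<^sub>R x \<in> A}"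

definition is_base :: "'a::real_vector set \<Rightarrow> 'a set \<Rightarrow> bool" where
  "is_base K B \<longleftrightarrow> 0 \<notin> B \<and>
     (\<forall>k\<in>K - {0}. \<exists>!p. fst p > 0 \<and> snd p \<in> B \<and> k = fst p *\<^sub>R snd p)"

definition nontrivial_cone :: "'a::real_vector set \<Rightarrow> bool" where
  "nontrivial_cone K \<longleftrightarrow> K \<noteq> {0} \<and> K \<noteq> UNIV"

definition img_shift :: "('z \<Rightarrow> 'x::real_vector) \<Rightarrow> 'z set \<Rightarrow> 'z \<Rightarrow> 'x set" where
  "img_shift f \<Omega> x0 = {f x - f x0 | x. x \<in> \<Omega>}"

definition efficient_wrt ::
  "('z \<Rightarrow> 'x::real_vector) \<Rightarrow> 'z set \<Rightarrow> 'x set \<Rightarrow> 'z \<Rightarrow> bool" where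
  "efficient_wrt f \<Omega> C x0 \<longleftrightarrow> x0 \<in> \<Omega> \<and> img_shift f \<Omega> x0 \<inter> uminus ` C = {0}"

definition VP_solution ::
  "('z \<Rightarrow> 'x::real_vector) \<Rightarrow> 'z set \<Rightarrow> 'x set \<Rightarrow> 'z \<Rightarrow> bool" where
  "VP_solution f \<Omega> B x0 \<longleftrightarrow> x0 \<in> \<Omega> \<and>
     (\<exists>V. convex V \<and> 0 \<in> V \<and> cor V = V \<and>
        cone hull {b + v | b v. b \<in> B \<and> v \<in> V} \<noteq> UNIV \<and>
        efficient_wrt f \<Omega> (cone hull {b + v | b v. b \<in> B \<and> v \<in> V}) x0)"

definition VH_solution ::
  "('z \<Rightarrow> 'x::real_vector) \<Rightarrow> 'z set \<Rightarrow> 'x set \<Rightarrow> 'z \<Rightarrow> bool" where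
  "VH_solution f \<Omega> K x0 \<longleftrightarrow> x0 \<in> \<Omega> \<and>
     (\<exists>C. convex C \<and> cone C \<and> C \<inter> uminus ` C = {0} \<and> K - {0} \<subseteq> cor C \<and>
        efficient_wrt f \<Omega> C x0)"

definition HuV_proper ::
  "('z \<Rightarrow> 'x::real_vector) \<Rightarrow> 'z set \<Rightarrow> 'x set \<Rightarrow> 'z \<Rightarrow> bool" where
  "HuV_proper f \<Omega> K x0 \<longleftrightarrow> x0 \<in> \<Omega> \<and>
     vcl (convex hull (cone hull (img_shift f \<Omega> x0 \<union> K))) \<inter> uminus ` K = {0}"

definition BeV_proper ::
  "('z \<Rightarrow> 'x::real_vector) \<Rightarrow> 'z set \<Rightarrow> 'x set \<Rightarrow> 'z \<Rightarrow> bool" where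
  "BeV_proper f \<Omega> K x0 \<longleftrightarrow> x0 \<in> \<Omega> \<and>
     vcl (cone hull {y + k | y k. y \<in> img_shift f \<Omega> x0 \<and> k \<in> K}) \<inter> uminus ` K = {0}"

end

theory Submission
  imports Defs
begin

text \<open>The Benson and Hurwicz conditions compare the vector closures of
  \<open>cone (f(\<Omega>) - f(x0) + K)\<close> and of \<open>conv (cone (f(\<Omega>) - f(x0) \<union> K))\<close>; the first set is
  contained in the second, and they coincide when \<open>f(\<Omega>) + K\<close> is convex. A VP solution
  yields a VH solution with the cone generated by the algebraically open convex set \<open>B + V\<close>:
  it is pointed because \<open>0 \<notin> B + V\<close>, and nonzero elements of \<open>K\<close>, being positive multiples
  of points of \<open>B + V\<close>, lie in its core. Finally, if \<open>x0\<close> is efficient for a pointed convex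
  cone \<open>C\<close> whose core contains \<open>K - {0}\<close>, then \<open>cone (f(\<Omega>) - f(x0) + K)\<close> meets \<open>-C\<close> only
  in \<open>0\<close>, while any \<open>-k\<close> with \<open>k \<in> K - {0}\<close> in its vector closure would produce nearby
  nonzero points of that cone in \<open>-C\<close>.\<close>

lemma vcl_mono: "A \<subseteq> A' \<Longrightarrow> vcl A \<subseteq> vcl A'"
  unfolding vcl_def by blast

lemma subset_vcl: "A \<subseteq> vcl A"
  unfolding vcl_def by (auto intro!: exI[of _ 0])

lemma vcl_inter_uminus_eq_0_mono:
  assumes "A \<subseteq> A'" "0 \<in> A" "0 \<in> K" "vcl A' \<inter> uminus ` K = {0}"
  shows "vcl A \<inter> uminus ` K = {0}"
proof -
  have "vcl A \<inter> uminus ` K \<subseteq> {0}" using assms(4) vcl_mono[OF assms(1)] by blast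
  moreover have "0 \<in> uminus ` K" using assms(3) by (rule rev_image_eqI) simp
  ultimately show ?thesis using assms(2) subset_vcl[of A] by blast
qed

lemma cor_mono: "A \<subseteq> A' \<Longrightarrow> cor A \<subseteq> cor A'"
  unfolding cor_def by blast

lemma sums_subset_cor_sums:
  assumes "V \<subseteq> cor V"
  shows "{b + v | b v. b \<in> B \<and> v \<in> V} \<subseteq> cor {b + v | b v. b \<in> B \<and> v \<in> V}"
proof
  fix z assume "z \<in> {b + v | b v. b \<in> B \<and> v \<in> V}"
  then obtain b v where z: "z = b + v" "b \<in> B" "v \<in> V" by blast
  have "\<exists>l'>0. \<forall>l\<in>{0..l'}. z + l *\<^sub>R x' \<in> {b + v | b v. b \<in> B \<and> v \<in> V}" for x'
  proof -
    obtain l' where "l' > 0" "\<forall>l\<in>{0..l'}. v + l *\<^sub>R x' \<in> V"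
      using z(3) assms unfolding cor_def by blast
    then show ?thesis using z by (metis (mono_tags, lifting) add.assoc mem_Collect_eq)
  qed
  then show "z \<in> cor {b + v | b v. b \<in> B \<and> v \<in> V}"
    using z unfolding cor_def by blast
qed

lemma cone_hull_eq_UNIV_if_0_in_cor:
  assumes "0 \<in> cor A"
  shows "cone hull A = UNIV"
proof -
  have "x \<in> cone hull A" for x
  proof -
    obtain l' where "l' > 0" "\<forall>l\<in>{0..l'}. 0 + l *\<^sub>R x \<in> A"
      using assms unfolding cor_def by blast
    then have "l' *\<^sub>R x \<in> A" by simp
    then have "(1 / l') *\<^sub>R (l' *\<^sub>R x) \<in> cone hull A"
      using \<open>l' > 0\<close> by (intro mem_cone_hull) auto
    then show ?thesis using \<open>l' > 0\<close> by simp
  qed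
  then show ?thesis by blast
qed

lemma scaleR_in_cor_cone:
  assumes "cone C" "x \<in> cor C" "t > 0"
  shows "t *\<^sub>R x \<in> cor C"
proof -
  have "\<exists>l'>0. \<forall>l\<in>{0..l'}. t *\<^sub>R x + l *\<^sub>R y \<in> C" for y
  proof -
    obtain l' where l': "l' > 0" "\<forall>l\<in>{0..l'}. x + l *\<^sub>R y \<in> C"
      using assms(2) unfolding cor_def by blast
    have "t *\<^sub>R x + l *\<^sub>R y \<in> C" if "l \<in> {0..t * l'}" for l
    proof -
      have "x + (l / t) *\<^sub>R y \<in> C" using l' that assms(3) by (auto simp: field_simps)
      then have "t *\<^sub>R (x + (l / t) *\<^sub>R y) \<in> C" using assms(1,3) by (simp add: mem_cone)
      then show ?thesis using assms(3) by (simp add: scaleR_add_right)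
    qed
    then show ?thesis using l'(1) assms(3) by (intro exI[of _ "t * l'"]) auto
  qed
  moreover have "t *\<^sub>R x \<in> C" using assms unfolding cor_def by (simp add: mem_cone)
  ultimately show ?thesis unfolding cor_def by blast
qed

lemma pointedD:
  fixes C :: "'a::ab_group_add set"
  assumes "C \<inter> uminus ` C = {0}" "x \<in> C" "- x \<in> C"
  shows "x = 0"
proof -
  have "x \<in> uminus ` C" by (rule rev_image_eqI[OF assms(3)]) simp
  then show ?thesis using assms(1,2) by blast
qed

lemma convex_cone_add:
  "convex C \<Longrightarrow> cone C \<Longrightarrow> a \<in> C \<Longrightarrow> b \<in> C \<Longrightarrow> a + b \<in> C"
  using convex_cone by blast

lemma pointed_cone_hull_convex:
  assumes "convex D" "0 \<notin> D" "D \<noteq> {}"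
  shows "cone hull D \<inter> uminus ` (cone hull D) = {0}"
proof -
  have "c = 0" if c: "c \<in> cone hull D" "- c \<in> cone hull D" for c
  proof (rule ccontr)
    assume "c \<noteq> 0"
    obtain s d1 where 1: "c = s *\<^sub>R d1" "s \<ge> 0" "d1 \<in> D"
      using c(1) unfolding cone_hull_expl by blast
    obtain r d2 where 2: "- c = r *\<^sub>R d2" "r \<ge> 0" "d2 \<in> D"
      using c(2) unfolding cone_hull_expl by blast
    have "s > 0" "r > 0" using 1 2 \<open>c \<noteq> 0\<close> by (auto simp: order_le_less)
    \<comment> \<open>the convex combination of \<open>d1\<close> and \<open>d2\<close> proportional to \<open>s\<close> and \<open>r\<close> is \<open>0\<close>\<close>
    have "(s / (s + r)) *\<^sub>R d1 + (r / (s + r)) *\<^sub>R d2 \<in> D"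
      using \<open>s > 0\<close> \<open>r > 0\<close> 1 2
      by (intro convexD[OF assms(1)]) (auto simp: add_divide_distrib[symmetric])
    moreover have "(s / (s + r)) *\<^sub>R d1 + (r / (s + r)) *\<^sub>R d2 = (1 / (s + r)) *\<^sub>R (c + - c)"
      using 1 2 by (simp add: scaleR_add_right)
    ultimately show False using assms(2) by simp
  qed
  moreover have "0 \<in> cone hull D" using assms(3) cone_hull_contains_0 by blast
  ultimately show ?thesis by force
qed

lemma base_representation:
  assumes "is_base K B" "k \<in> K" "k \<noteq> 0"
  obtains t b where "t > 0" "b \<in> B" "k = t *\<^sub>R b"
  using assms unfolding is_base_def by (metis Diff_iff singletonD)

lemma zero_in_sums: "0 \<in> A \<Longrightarrow> 0 \<in> B \<Longrightarrow> (0::'a::monoid_add) \<in> {a + b | a b. a \<in> A \<and> b \<in> B}"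
  by force

lemma cone_hull_sums_subset_convex_hull_cone_hull_Un:
  "cone hull {a + b | a b. a \<in> A \<and> b \<in> B} \<subseteq> convex hull (cone hull (A \<union> B))"
proof
  fix z assume "z \<in> cone hull {a + b | a b. a \<in> A \<and> b \<in> B}"
  then obtain c a b where z: "z = c *\<^sub>R (a + b)" "c \<ge> 0" "a \<in> A" "b \<in> B"
    unfolding cone_hull_expl by blast
  have "(2 * c) *\<^sub>R a \<in> cone hull (A \<union> B)" "(2 * c) *\<^sub>R b \<in> cone hull (A \<union> B)"
    using z by (auto intro: mem_cone_hull)
  then have "(1/2) *\<^sub>R ((2 * c) *\<^sub>R a) + (1/2) *\<^sub>R ((2 * c) *\<^sub>R b) \<in> convex hull (cone hull (A \<union> B))"
    by (intro convexD[OF convex_convex_hull]) (auto intro: hull_inc)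
  then show "z \<in> convex hull (cone hull (A \<union> B))"
    using z by (simp add: scaleR_add_right)
qed

lemma convex_hull_cone_hull_Un_subset_cone_hull_sums:
  assumes "convex {a + b | a b. a \<in> A \<and> b \<in> B}" "0 \<in> A" "0 \<in> B"
  shows "convex hull (cone hull (A \<union> B)) \<subseteq> cone hull {a + b | a b. a \<in> A \<and> b \<in> B}"
proof -
  have "A \<union> B \<subseteq> {a + b | a b. a \<in> A \<and> b \<in> B}"
    using assms(2,3) by force
  then show ?thesis
    by (intro hull_minimal hull_mono convex_cone_hull[OF assms(1)])
qed

lemma zero_in_img_shift: "x0 \<in> \<Omega> \<Longrightarrow> 0 \<in> img_shift f \<Omega> x0"
  unfolding img_shift_def by force

lemma img_shift_sums:
  "{y + k | y k. y \<in> img_shift f \<Omega> x0 \<and> k \<in> K}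
     = (\<lambda>z. z - f x0) ` {y + k | y k. y \<in> f ` \<Omega> \<and> k \<in> K}"
proof (intro set_eqI iffI)
  fix z assume "z \<in> {y + k | y k. y \<in> img_shift f \<Omega> x0 \<and> k \<in> K}"
  then obtain x k where "x \<in> \<Omega>" "k \<in> K" "z = (f x + k) - f x0"
    unfolding img_shift_def by (auto simp: algebra_simps)
  then show "z \<in> (\<lambda>z. z - f x0) ` {y + k | y k. y \<in> f ` \<Omega> \<and> k \<in> K}" by blast
next
  fix z assume "z \<in> (\<lambda>z. z - f x0) ` {y + k | y k. y \<in> f ` \<Omega> \<and> k \<in> K}"
  then obtain x k where "x \<in> \<Omega>" "k \<in> K" "z = (f x - f x0) + k"
    by (auto simp: algebra_simps)
  then show "z \<in> {y + k | y k. y \<in> img_shift f \<Omega> x0 \<and> k \<in> K}"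
    unfolding img_shift_def by blast
qed

lemma vcl_uminus_cor_meets_uminus:
  assumes C: "convex C" "cone C" "C \<inter> uminus ` C = {0}"
    and k: "k \<in> cor C" "k \<noteq> 0" "- k \<in> vcl S"
  obtains w where "w \<in> S" "w \<noteq> 0" "- w \<in> C"
proof -
  define h where "h = (1/2) *\<^sub>R k"
  have h: "h \<in> cor C" unfolding h_def by (rule scaleR_in_cor_cone[OF C(2) k(1)]) simp
  obtain x where x: "\<forall>l'>0. \<exists>l\<in>{0..l'}. - k + l *\<^sub>R x \<in> S"
    using k(3) unfolding vcl_def by blast
  obtain l1 where l1: "l1 > 0" "\<forall>l\<in>{0..l1}. h + l *\<^sub>R (- x) \<in> C"
    using h unfolding cor_def by blast
  obtain l where l: "l \<in> {0..l1}" "- k + l *\<^sub>R x \<in> S"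
    using x l1(1) by blast
  define c where "c = h + l *\<^sub>R (- x)"
  have "h \<in> C" "c \<in> C" using h l1(2) l(1) unfolding c_def cor_def by auto
  \<comment> \<open>splitting \<open>k\<close> in halves keeps a nonzero summand \<open>h\<close> of \<open>- w\<close> in the pointed cone\<close>
  have w: "- (- k + l *\<^sub>R x) = h + c"
    unfolding c_def h_def by (simp add: algebra_simps scaleR_2[symmetric])
  have "h + c \<noteq> 0"
  proof
    assume "h + c = 0"
    then have "- h \<in> C" using \<open>c \<in> C\<close> by (simp add: eq_neg_iff_add_eq_0[symmetric])
    then have "h = 0" using pointedD[OF C(3) \<open>h \<in> C\<close>] by blast
    then show False using k(2) unfolding h_def by simp
  qed
  moreover have "h + c \<in> C" using convex_cone_add[OF C(1,2) \<open>h \<in> C\<close> \<open>c \<in> C\<close>] .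
  ultimately show thesis
    using that[OF l(2)] w by (metis neg_0_equal_iff_equal)
qed

lemma cone_hull_sums_inter_uminus:
  assumes C: "convex C" "cone C" "C \<inter> uminus ` C = {0}" "K \<subseteq> C"
    and eff: "I \<inter> uminus ` C = {0}"
    and w: "w \<in> cone hull {y + k | y k. y \<in> I \<and> k \<in> K}" "- w \<in> C"
  shows "w = 0"
proof -
  obtain t y k where tyk: "w = t *\<^sub>R (y + k)" "t \<ge> 0" "y \<in> I" "k \<in> K"
    using w(1) unfolding cone_hull_expl by blast
  show ?thesis
  proof (cases "t = 0")
    case False
    then have "t > 0" using tyk(2) by simp
    have "- (t *\<^sub>R y) = - w + t *\<^sub>R k" using tyk(1) by (simp add: algebra_simps)
    also have "\<dots> \<in> C"
      using tyk(2,4) C w(2) by (intro convex_cone_add) (auto intro: mem_cone)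
    finally have "(1 / t) *\<^sub>R (- (t *\<^sub>R y)) \<in> C"
      using C(2) \<open>t > 0\<close> by (intro mem_cone) auto
    then have "y \<in> uminus ` C" using \<open>t > 0\<close> by (intro rev_image_eqI[of "- y"]) auto
    then have "y = 0" using tyk(3) eff by blast
    then have "w \<in> C" using tyk C(2,4) by (auto intro: mem_cone)
    then show ?thesis using pointedD[OF C(3)] w(2) by blast
  qed (use tyk in simp)
qed

lemma BeV_proper_imp_efficient:
  assumes "cone K" "K \<noteq> {}" "BeV_proper f \<Omega> K x0"
  shows "efficient_wrt f \<Omega> K x0"
proof -
  let ?I = "img_shift f \<Omega> x0"
  have x0: "x0 \<in> \<Omega>"
    and BeV: "vcl (cone hull {y + k | y k. y \<in> ?I \<and> k \<in> K}) \<inter> uminus ` K = {0}"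
    using assms(3) unfolding BeV_proper_def by auto
  have "0 \<in> K" using assms(1,2) cone_contains_0 by blast
  have "?I \<subseteq> cone hull {y + k | y k. y \<in> ?I \<and> k \<in> K}"
  proof
    fix y assume "y \<in> ?I"
    then have "y + 0 \<in> {y + k | y k. y \<in> ?I \<and> k \<in> K}" using \<open>0 \<in> K\<close> by blast
    then show "y \<in> cone hull {y + k | y k. y \<in> ?I \<and> k \<in> K}" by (simp add: hull_inc)
  qed
  then have "vcl ?I \<inter> uminus ` K = {0}"
    using zero_in_img_shift[OF x0] \<open>0 \<in> K\<close> BeV by (rule vcl_inter_uminus_eq_0_mono)
  then have "?I \<inter> uminus ` K = {0}"
    using subset_vcl[of ?I] zero_in_img_shift[OF x0] rev_image_eqI[OF \<open>0 \<in> K\<close>, of 0 uminus]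
    by auto
  then show ?thesis using x0 unfolding efficient_wrt_def by blast
qed

lemma HuV_proper_imp_BeV_proper:
  assumes "cone K" "K \<noteq> {}" "HuV_proper f \<Omega> K x0"
  shows "BeV_proper f \<Omega> K x0"
proof -
  let ?I = "img_shift f \<Omega> x0"
  have x0: "x0 \<in> \<Omega>"
    and HuV: "vcl (convex hull (cone hull (?I \<union> K))) \<inter> uminus ` K = {0}"
    using assms(3) unfolding HuV_proper_def by auto
  have "0 \<in> K" using assms(1,2) cone_contains_0 by blast
  have "0 \<in> cone hull {y + k | y k. y \<in> ?I \<and> k \<in> K}"
    using zero_in_sums[OF zero_in_img_shift[OF x0] \<open>0 \<in> K\<close>] by (rule hull_inc)
  then show ?thesis
    using x0 vcl_inter_uminus_eq_0_mono[OF cone_hull_sums_subset_convex_hull_cone_hull_Un _ \<open>0 \<in> K\<close> HuV]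
    unfolding BeV_proper_def by blast
qed

lemma BeV_proper_imp_HuV_proper:
  assumes "cone K" "K \<noteq> {}" "convex {y + k | y k. y \<in> f ` \<Omega> \<and> k \<in> K}"
    and "BeV_proper f \<Omega> K x0"
  shows "HuV_proper f \<Omega> K x0"
proof -
  let ?I = "img_shift f \<Omega> x0"
  have x0: "x0 \<in> \<Omega>"
    and BeV: "vcl (cone hull {y + k | y k. y \<in> ?I \<and> k \<in> K}) \<inter> uminus ` K = {0}"
    using assms(4) unfolding BeV_proper_def by auto
  have "0 \<in> K" using assms(1,2) cone_contains_0 by blast
  have "convex {y + k | y k. y \<in> ?I \<and> k \<in> K}"
    unfolding img_shift_sums using assms(3) by (rule convex_translation_subtract)
  then have "convex hull (cone hull (?I \<union> K)) \<subseteq> cone hull {y + k | y k. y \<in> ?I \<and> k \<in> K}"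
    using zero_in_img_shift[OF x0] \<open>0 \<in> K\<close> by (rule convex_hull_cone_hull_Un_subset_cone_hull_sums)
  moreover have "0 \<in> convex hull (cone hull (?I \<union> K))"
    using zero_in_img_shift[OF x0] by (auto intro!: hull_inc)
  ultimately have "vcl (convex hull (cone hull (?I \<union> K))) \<inter> uminus ` K = {0}"
    using \<open>0 \<in> K\<close> BeV by (rule vcl_inter_uminus_eq_0_mono)
  then show ?thesis using x0 unfolding HuV_proper_def by blast
qed

lemma VP_solution_imp_VH_solution:
  assumes "is_base K B" "convex B" "VP_solution f \<Omega> B x0"
  shows "VH_solution f \<Omega> K x0"
proof -
  obtain V where V: "convex V" "0 \<in> V" "cor V = V"
    and ne: "cone hull {b + v | b v. b \<in> B \<and> v \<in> V} \<noteq> UNIV"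
    and eff: "efficient_wrt f \<Omega> (cone hull {b + v | b v. b \<in> B \<and> v \<in> V}) x0"
    using assms(3) unfolding VP_solution_def by blast
  define D where "D = {b + v | b v. b \<in> B \<and> v \<in> V}"
  define C where "C = cone hull D"
  have "D = (\<Union>b\<in>B. \<Union>v\<in>V. {b + v})" unfolding D_def by blast
  then have "convex D" using convex_sums[OF assms(2) V(1)] by simp
  have D_cor: "D \<subseteq> cor D" unfolding D_def using V(3) by (intro sums_subset_cor_sums) simp
  have "0 \<in> uminus ` C" using eff unfolding efficient_wrt_def C_def D_def by blast
  then have "0 \<in> C" by (metis image_iff neg_equal_0_iff_equal)
  then have "D \<noteq> {}" unfolding C_def using cone_hull_contains_0 by blast
  have "0 \<notin> D" using D_cor cone_hull_eq_UNIV_if_0_in_cor ne unfolding D_def by blast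
  have "K - {0} \<subseteq> cor C"
  proof
    fix k assume "k \<in> K - {0}"
    then obtain t b where tb: "t > 0" "b \<in> B" "k = t *\<^sub>R b"
      using base_representation[OF assms(1)] by blast
    have "b \<in> D" using tb(2) V(2) unfolding D_def by force
    then have "b \<in> cor C" using D_cor cor_mono[OF hull_subset[of D cone]] unfolding C_def by blast
    then show "k \<in> cor C"
      unfolding tb(3) C_def by (rule scaleR_in_cor_cone[OF cone_cone_hull _ tb(1)])
  qed
  moreover have "convex C" "cone C" unfolding C_def
    by (simp_all add: convex_cone_hull[OF \<open>convex D\<close>] cone_cone_hull)
  moreover have "C \<inter> uminus ` C = {0}"
    unfolding C_def using \<open>convex D\<close> \<open>0 \<notin> D\<close> \<open>D \<noteq> {}\<close> by (rule pointed_cone_hull_convex)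
  ultimately show ?thesis
    using eff unfolding VH_solution_def efficient_wrt_def C_def D_def by blast
qed

lemma VH_solution_imp_BeV_proper:
  assumes "cone K" "K \<noteq> {}" "VH_solution f \<Omega> K x0"
  shows "BeV_proper f \<Omega> K x0"
proof -
  let ?S = "cone hull {y + k | y k. y \<in> img_shift f \<Omega> x0 \<and> k \<in> K}"
  obtain C where C: "convex C" "cone C" "C \<inter> uminus ` C = {0}" "K - {0} \<subseteq> cor C"
    and eff: "efficient_wrt f \<Omega> C x0" and x0: "x0 \<in> \<Omega>"
    using assms(3) unfolding VH_solution_def by blast
  have eff_C: "img_shift f \<Omega> x0 \<inter> uminus ` C = {0}"
    using eff unfolding efficient_wrt_def by blast
  have "0 \<in> K" using assms(1,2) cone_contains_0 by blast
  have "cor C \<subseteq> C" "0 \<in> C" using C(3) unfolding cor_def by blast+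
  then have "K \<subseteq> C" using C(4) by blast
  have "k = 0" if k: "k \<in> K" "- k \<in> vcl ?S" for k
  proof (rule ccontr)
    assume "k \<noteq> 0"
    then have "k \<in> cor C" using C(4) k(1) by blast
    then obtain w where "w \<in> ?S" "w \<noteq> 0" "- w \<in> C"
      by (rule vcl_uminus_cor_meets_uminus[OF C(1-3) _ \<open>k \<noteq> 0\<close> k(2)])
    moreover have "w = 0"
      by (rule cone_hull_sums_inter_uminus[OF C(1-3) \<open>K \<subseteq> C\<close> eff_C \<open>w \<in> ?S\<close> \<open>- w \<in> C\<close>])
    ultimately show False by blast
  qed
  then have "vcl ?S \<inter> uminus ` K \<subseteq> {0}" by auto
  moreover have "0 \<in> vcl ?S"
    using subset_vcl hull_inc[OF zero_in_sums[OF zero_in_img_shift[OF x0] \<open>0 \<in> K\<close>]] by blast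
  moreover have "0 \<in> uminus ` K" using \<open>0 \<in> K\<close> by (rule rev_image_eqI) simp
  ultimately have "vcl ?S \<inter> uminus ` K = {0}" by blast
  then show ?thesis using x0 unfolding BeV_proper_def by blast
qed

theorem theorem4p14:
  fixes f :: "'z::real_vector \<Rightarrow> 'x::real_vector"
    and \<Omega> :: "'z set" and K B :: "'x set"
  assumes "\<Omega> \<noteq> {}"
    and "cone K" and "convex K" and "K \<noteq> {}" and "nontrivial_cone K"
    and "is_base K B" and "convex B"
  shows "(\<forall>x0. BeV_proper f \<Omega> K x0 \<longrightarrow> efficient_wrt f \<Omega> K x0)
    \<and> (\<forall>x0. HuV_proper f \<Omega> K x0 \<longrightarrow> BeV_proper f \<Omega> K x0)
    \<and> (convex {y + k | y k. y \<in> f ` \<Omega> \<and> k \<in> K} \<longrightarrow>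
         (\<forall>x0. BeV_proper f \<Omega> K x0 \<longrightarrow> HuV_proper f \<Omega> K x0))
    \<and> (\<forall>x0. VP_solution f \<Omega> B x0 \<longrightarrow> VH_solution f \<Omega> K x0)
    \<and> (\<forall>x0. VH_solution f \<Omega> K x0 \<longrightarrow> BeV_proper f \<Omega> K x0)"
proof (intro conjI allI impI)
  fix x0
  show "efficient_wrt f \<Omega> K x0" if "BeV_proper f \<Omega> K x0"
    using assms(2,4) that by (rule BeV_proper_imp_efficient)
  show "BeV_proper f \<Omega> K x0" if "HuV_proper f \<Omega> K x0"
    using assms(2,4) that by (rule HuV_proper_imp_BeV_proper)
  show "HuV_proper f \<Omega> K x0"
    if "convex {y + k | y k. y \<in> f ` \<Omega> \<and> k \<in> K}" "BeV_proper f \<Omega> K x0"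
    using assms(2,4) that by (rule BeV_proper_imp_HuV_proper)
  show "VH_solution f \<Omega> K x0" if "VP_solution f \<Omega> B x0"
    using assms(6,7) that by (rule VP_solution_imp_VH_solution)
  show "BeV_proper f \<Omega> K x0" if "VH_solution f \<Omega> K x0"
    using assms(2,4) that by (rule VH_solution_imp_BeV_proper)
qed

end
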